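(* Consider $\dot x(t)=A_{\sigma(t)}x(t)+B_{\sigma(t)}u(t)$ with $A_i\in\mathbb{R}^{n\times n}$, $B_i\in\mathbb{R}^{n\times m}$, $i=1,\dots,N$, and let $\bar T>0$. Assume there exist continuously differentiable $X_i:[0,\bar T]\to\mathbb{D}^n$ with $X_i(\tau)$ nonsingular for all $\tau$ and $X_i(\bar T)\in\mathbb{D}^n_{\succ0}$, continuous $U_i:[0,\bar T]\to\mathbb{R}^{m\times n}$ ($i=1,\dots,N$) and scalars $\varepsilon,\alpha>0$ such that for all $\tau\in[0,\bar T]$ and all $i$: $A_iX_i(\tau)+B_iU_i(\tau)+\alpha I_n\ge0$, $\big[A_iX_i(\bar T)+B_iU_i(\bar T)\big]\mathbf{1}_n<0$, $\big[-\dot X_i(\tau)+A_iX_i(\tau)+B_iU_i(\tau)\big]\mathbf{1}_n<0$, and for all $i\ne j$: $\big[X_j(\bar T)-X_i(0)+\varepsilon I_n\big]\mathbf{1}_n\le0$. Let $K_i(\tau)=U_i(\tau)X_i(\tau)^{-1}$ and apply $u(t_k+\tau)=K_{\sigma(t_k^+)}(\tau)x(t_k+\tau)$ for $\tau\in[0,\bar T)$ and $u(t_k+\tau)=K_{\sigma(t_k^+)}(\bar T)x(t_k+\tau)$ for $\tau\in[\bar T,t_{k+1}-t_k)$, where $\sigma(t_k^+)$ is the mode active on $(t_k,t_{k+1}]$. Then the closed-loop system is positive and asymptotically stable under minimum dwell-time $\bar T$.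
   Context: $\mathbb{D}^n$ denotes $n\times n$ diagonal matrices, $\mathbb{D}^n_{\succ0}$ those with positive diagonal. Matrix/vector inequalities are entrywise; $\mathbf{1}_n$ is the vector of ones. The switching signal $\sigma$ is piecewise constant, left-continuous, with strictly increasing unbounded switching instants $t_k$. Positivity means $x(t)\ge0$ for all $t$ whenever $x(0)\ge0$. Asymptotic stability under minimum dwell-time $\bar T$ means global asymptotic stability of the origin for every switching signal with $\bar T\le t_{k+1}-t_k<\infty$. *)

theory Defs
  imports "HOL-Analysis.Analysis"
begin

(* Entrywise strict inequality of vectors (the library's < on vec is NOT entrywise strict). *)
definition ent_less :: "real^'n \<Rightarrow> real^'n \<Rightarrow> bool" where
  "ent_less x y \<longleftrightarrow> (\<forall>i. x$i < y$i)"

definition ones :: "real^'n" where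
  "ones = (\<chi> i. 1)"

definition diag_mat :: "real^'n^'n \<Rightarrow> bool" where
  "diag_mat M \<longleftrightarrow> (\<forall>i j. i \<noteq> j \<longrightarrow> M$i$j = 0)"

definition pos_diag_mat :: "real^'n^'n \<Rightarrow> bool" where
  "pos_diag_mat M \<longleftrightarrow> diag_mat M \<and> (\<forall>i. M$i$i > 0)"

(* Switching signal sigma on [0,oo) with modes in {1..N}, given by its switching
   instants t 0 = 0 < t 1 < t 2 < ... (unbounded) and the mode s k active on
   (t k, t (Suc k)]; the instants are genuine switches: s (Suc k) \<noteq> s k. *)
definition switching_signal :: "nat \<Rightarrow> (nat \<Rightarrow> real) \<Rightarrow> (nat \<Rightarrow> nat) \<Rightarrow> bool" where
  "switching_signal N t s \<longleftrightarrow>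
     t 0 = 0 \<and> strict_mono t \<and> (\<forall>M. \<exists>k. t k > M) \<and>
     (\<forall>k. s k \<in> {1..N}) \<and> (\<forall>k. s (Suc k) \<noteq> s k)"

definition dwell_time :: "real \<Rightarrow> (nat \<Rightarrow> real) \<Rightarrow> bool" where
  "dwell_time Tb t \<longleftrightarrow> (\<forall>k. Tb \<le> t (Suc k) - t k)"

definition closed_loop_solution ::
  "(nat \<Rightarrow> real^'n^'n) \<Rightarrow> (nat \<Rightarrow> real^'m^'n) \<Rightarrow> (nat \<Rightarrow> real \<Rightarrow> real^'n^'m) \<Rightarrow> real
   \<Rightarrow> (nat \<Rightarrow> real) \<Rightarrow> (nat \<Rightarrow> nat) \<Rightarrow> (real \<Rightarrow> real^'n) \<Rightarrow> bool" where
  "closed_loop_solution A B K Tb t s x \<longleftrightarrow>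
     continuous_on {0..} x \<and>
     (\<forall>k. \<forall>r\<in>{t k..t (Suc k)}.
        (x has_vector_derivative
           ((A (s k) *v x r) + (B (s k) *v (K (s k) (min (r - t k) Tb) *v x r))))
        (at r within {t k..t (Suc k)}))"

definition closed_loop_positive ::
  "nat \<Rightarrow> (nat \<Rightarrow> real^'n^'n) \<Rightarrow> (nat \<Rightarrow> real^'m^'n) \<Rightarrow> (nat \<Rightarrow> real \<Rightarrow> real^'n^'m) \<Rightarrow> real \<Rightarrow> bool" where
  "closed_loop_positive N A B K Tb \<longleftrightarrow>
     (\<forall>t s x. switching_signal N t s \<and> closed_loop_solution A B K Tb t s x \<and> x 0 \<ge> 0
        \<longrightarrow> (\<forall>r\<ge>0. x r \<ge> 0))"

definition closed_loop_GAS_dwell ::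
  "nat \<Rightarrow> (nat \<Rightarrow> real^'n^'n) \<Rightarrow> (nat \<Rightarrow> real^'m^'n) \<Rightarrow> (nat \<Rightarrow> real \<Rightarrow> real^'n^'m) \<Rightarrow> real \<Rightarrow> bool" where
  "closed_loop_GAS_dwell N A B K Tb \<longleftrightarrow>
     (\<forall>t s. switching_signal N t s \<and> dwell_time Tb t \<longrightarrow>
        (\<forall>e>0. \<exists>d>0. \<forall>x. closed_loop_solution A B K Tb t s x \<and> norm (x 0) < d
            \<longrightarrow> (\<forall>r\<ge>0. norm (x r) < e)) \<and>
        (\<forall>x. closed_loop_solution A B K Tb t s x \<longrightarrow> (x \<longlongrightarrow> 0) at_top))"

end

theory Submission
  imports Defs "HOL-Real_Asymp.Real_Asymp"
begin

text \<open>
  In the scaled coordinates \<open>y\<^sub>j = x\<^sub>j / X\<^sub>i(\<tau>)\<^sub>j\<^sub>j\<close> the closed loop on a dwell interval becomes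
  \<open>y' = X\<^sup>-\<^sup>1 (- X' + A X + B U) y\<close>, a linear system whose matrix is Metzler with row sums
  at most \<open>- c\<close> for a uniform \<open>c > 0\<close> (compactness of \<open>[0, T]\<close>). A first-touching
  argument for such systems shows that nonnegative solutions stay nonnegative and that
  \<open>max\<^sub>j |x\<^sub>j| / X\<^sub>j\<^sub>j\<close> decays like \<open>exp (- c t / 2)\<close>. Along a mode the weight runs from
  \<open>X\<^sub>i(0)\<close> to \<open>X\<^sub>i(T)\<close> and is then frozen; at a switch the diagonal of the last condition,
  \<open>X\<^sub>j(T) \<le> X\<^sub>i(0)\<close>, lets the next mode inherit the weighted bound. Uniform bounds on the
  diagonal of \<open>X\<close> turn this into an exponential estimate for \<open>norm x\<close>.
\<close>

section \<open>A comparison principle for Metzler systems\<close>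

lemma neg_derivative_imp_greater_before:
  fixes f :: "real \<Rightarrow> real"
  assumes "(f has_real_derivative D) (at r within {a..b})" "D < 0" "a < r" "r \<le> b"
  obtains r' where "r' \<in> {a..<r}" "f r < f r'"
proof -
  obtain d where "d > 0" and d: "\<And>h. h > 0 \<Longrightarrow> r - h \<in> {a..b} \<Longrightarrow> h < d \<Longrightarrow> f r < f (r - h)"
    using has_real_derivative_neg_dec_left[OF assms(1,2)] by blast
  define h where "h = min d (r - a) / 2"
  have "h > 0" "r - h \<in> {a..<r}" "h < d"
    using \<open>d > 0\<close> \<open>a < r\<close> unfolding h_def by (auto simp: min_def field_simps)
  with d[of h] \<open>r \<le> b\<close> that[of "r - h"] show ?thesis by auto
qed

lemma finite_family_stays_negative:
  fixes g g' :: "'k \<Rightarrow> real \<Rightarrow> real"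
  assumes "finite I" and "a \<le> b"
    and deriv: "\<And>k r. k \<in> I \<Longrightarrow> r \<in> {a..b} \<Longrightarrow> (g k has_real_derivative g' k r) (at r within {a..b})"
    and init: "\<And>k. k \<in> I \<Longrightarrow> g k a < 0"
    and touch: "\<And>k r. k \<in> I \<Longrightarrow> r \<in> {a<..b} \<Longrightarrow> g k r = 0 \<Longrightarrow> (\<forall>l\<in>I. g l r \<le> 0) \<Longrightarrow> g' k r < 0"
    and "k \<in> I" "r \<in> {a..b}"
  shows "g k r < 0"
proof (rule ccontr)
  assume "\<not> g k r < 0"
  define S where "S = (\<Union>k\<in>I. {r \<in> {a..b}. 0 \<le> g k r})"
  have cont: "continuous_on {a..b} (g k)" if "k \<in> I" for k
    using deriv[OF that] by (rule DERIV_continuous_on)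
  have "closed S"
    unfolding S_def using \<open>finite I\<close>
    by (intro closed_UN ballI continuous_on_closed_Collect_le cont continuous_on_const) auto
  moreover have "S \<noteq> {}"
    using \<open>\<not> g k r < 0\<close> \<open>k \<in> I\<close> \<open>r \<in> {a..b}\<close> unfolding S_def by (auto simp: not_less)
  moreover have bdd: "bdd_below S"
    unfolding S_def by (auto intro: bdd_belowI[of _ a])
  ultimately have "Inf S \<in> S" by (intro closed_contains_Inf)
  define r0 where "r0 = Inf S"
  from \<open>Inf S \<in> S\<close> obtain k0 where k0: "k0 \<in> I" "r0 \<in> {a..b}" "0 \<le> g k0 r0"
    unfolding S_def r0_def by auto
  have "a < r0" using k0 init[of k0] by (cases "r0 = a") auto
  have below: "g l r < 0" if "l \<in> I" "r \<in> {a..<r0}" for l r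
  proof (rule ccontr)
    assume "\<not> g l r < 0"
    hence "r \<in> S" using that k0(2) unfolding S_def by (auto simp: not_less)
    hence "r0 \<le> r" unfolding r0_def using bdd by (rule cInf_lower)
    thus False using that by auto
  qed
  have nonpos: "g l r0 \<le> 0" if "l \<in> I" for l
  proof -
    have "{a..<r0} \<subseteq> {r \<in> {a..b}. g l r \<le> 0}"
      using below[OF that] k0(2) by fastforce
    hence "closure {a..<r0} \<subseteq> {r \<in> {a..b}. g l r \<le> 0}"
      by (intro closure_minimal continuous_on_closed_Collect_le cont that continuous_on_const) auto
    thus ?thesis using \<open>a < r0\<close> by (auto simp: subset_iff)
  qed
  with k0 have "g k0 r0 = 0" by (simp add: order_antisym)
  with k0 nonpos \<open>a < r0\<close> have "g' k0 r0 < 0" by (intro touch) auto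
  then obtain r' where "r' \<in> {a..<r0}" "g k0 r0 < g k0 r'"
    using neg_derivative_imp_greater_before[OF deriv[OF k0(1,2)] _ \<open>a < r0\<close>] k0(2) by auto
  with below[OF k0(1)] \<open>g k0 r0 = 0\<close> show False by fastforce
qed

lemma has_vector_derivative_vec_nth:
  assumes "(f has_vector_derivative f') F"
  shows "((\<lambda>t. f t $ i) has_vector_derivative f' $ i) F"
  using bounded_linear.has_derivative[OF bounded_linear_vec_nth assms[unfolded has_vector_derivative_def]]
  by (simp add: has_vector_derivative_def)

lemma metzler_row_le_row_sum:
  fixes W :: "real^'n^'n"
  assumes "\<And>l. l \<noteq> j \<Longrightarrow> 0 \<le> W$j$l" and "z$j = h" and "\<And>l. z$l \<le> h"
  shows "(W *v z)$j \<le> h * (W *v ones)$j"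
proof -
  have "(W *v z)$j = (\<Sum>l\<in>UNIV. W$j$l * z$l)" by (simp add: matrix_vector_mult_def)
  also have "\<dots> \<le> (\<Sum>l\<in>UNIV. W$j$l * h)"
  proof (rule sum_mono)
    fix l
    show "W$j$l * z$l \<le> W$j$l * h"
      using assms by (cases "l = j") (auto intro: mult_left_mono)
  qed
  also have "\<dots> = h * (W *v ones)$j"
    by (simp add: matrix_vector_mult_def ones_def sum_distrib_left mult.commute)
  finally show ?thesis .
qed

lemma metzler_touching_slope:
  fixes F :: "real^'n^'n" and x w w' :: "real^'n"
  assumes "c > 0" "m > 0" "\<And>l. 0 < w $ l" "\<And>l. l \<noteq> k \<Longrightarrow> 0 \<le> F $ k $ l"
    and "(F *v ones) $ k \<le> w' $ k - c * w $ k"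
    and touch: "\<tau> * x $ k = m * w $ k" and below: "\<And>l. \<tau> * x $ l \<le> m * w $ l"
  shows "\<tau> * (F *v (\<chi> l. x $ l / w $ l)) $ k < - (c/2) * m * w $ k + m * w' $ k"
proof -
  have "(F *v (\<tau> *\<^sub>R (\<chi> l. x $ l / w $ l))) $ k \<le> m * (F *v ones) $ k"
  proof (rule metzler_row_le_row_sum)
    show "0 \<le> F $ k $ l" if "l \<noteq> k" for l using assms(4) that .
    show "(\<tau> *\<^sub>R (\<chi> l. x $ l / w $ l)) $ k = m"
      using touch assms(3)[of k] by (simp add: field_simps)
    show "(\<tau> *\<^sub>R (\<chi> l. x $ l / w $ l)) $ l \<le> m" for l
      using below[of l] assms(3)[of l] by (simp add: field_simps)
  qed
  also have "\<dots> \<le> m * (w' $ k - c * w $ k)"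
    using assms(2,5) by (intro mult_left_mono) auto
  finally have "\<tau> * (F *v (\<chi> l. x $ l / w $ l)) $ k \<le> m * (w' $ k - c * w $ k)"
    by (simp add: matrix_vector_mult_scaleR)
  moreover have "0 < c/2 * m * w $ k" using assms(1-3) by simp
  ultimately show ?thesis by (simp add: algebra_simps)
qed

text \<open>
  The barrier decays at rate \<open>c/2\<close> rather than \<open>c\<close> so that the slope comparison at a touching
  point is strict.
\<close>
lemma weighted_exp_barrier:
  fixes x w w' :: "real \<Rightarrow> real^'n" and F :: "real \<Rightarrow> real^'n^'n" and S :: "real set"
  assumes "a \<le> b" "c > 0" "finite S" "m > 0"
    and x_deriv: "\<And>r. r \<in> {a..b} \<Longrightarrow>
      (x has_vector_derivative F r *v (\<chi> l. x r $ l / w r $ l)) (at r within {a..b})"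
    and w_deriv: "\<And>r l. r \<in> {a..b} \<Longrightarrow>
      ((\<lambda>r. w r $ l) has_real_derivative w' r $ l) (at r within {a..b})"
    and w_pos: "\<And>r l. r \<in> {a..b} \<Longrightarrow> 0 < w r $ l"
    and metzler: "\<And>r l l'. r \<in> {a..b} \<Longrightarrow> l \<noteq> l' \<Longrightarrow> 0 \<le> F r $ l $ l'"
    and margin: "\<And>r l. r \<in> {a..b} \<Longrightarrow> (F r *v ones) $ l \<le> w' r $ l - c * w r $ l"
    and init: "\<And>\<sigma> l. \<sigma> \<in> S \<Longrightarrow> \<sigma> * x a $ l < m * w a $ l"
    and "\<sigma> \<in> S" "r \<in> {a..b}"
  shows "\<sigma> * x r $ j < m * exp (- (c/2) * (r - a)) * w r $ j"
proof -
  define h where "h r = m * exp (- (c/2) * (r - a))" for r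
  have h_pos: "h r > 0" for r unfolding h_def using \<open>m > 0\<close> by simp
  define g where "g = (\<lambda>(l, \<tau>) r. \<tau> * x r $ l - h r * w r $ l)"
  define g' where "g' = (\<lambda>(l, \<tau>) r. \<tau> * (F r *v (\<chi> l. x r $ l / w r $ l)) $ l
    - (- (c/2) * h r * w r $ l + h r * w' r $ l))"
  have "g (j, \<sigma>) r < 0"
  proof (rule finite_family_stays_negative[where I = "UNIV \<times> S" and g = g and g' = g' and a = a and b = b])
    show "finite ((UNIV :: 'n set) \<times> S)" using \<open>finite S\<close> by (simp add: finite_cartesian_product)
    show "(g p has_real_derivative g' p r') (at r' within {a..b})" if "r' \<in> {a..b}" for p r'
      using has_vector_derivative_vec_nth[OF x_deriv[OF that]] w_deriv[OF that]
      unfolding has_real_derivative_iff_has_vector_derivative[symmetric] g_def g'_def h_def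
      by (cases p) (auto intro!: derivative_eq_intros)
    show "g p a < 0" if "p \<in> UNIV \<times> S" for p
      using that init unfolding g_def h_def by auto
    show "g' p r' < 0"
      if "p \<in> UNIV \<times> S" "r' \<in> {a<..b}" "g p r' = 0" "\<forall>q\<in>UNIV \<times> S. g q r' \<le> 0" for p r'
    proof -
      obtain k \<tau> where p: "p = (k, \<tau>)" "\<tau> \<in> S" using \<open>p \<in> UNIV \<times> S\<close> by (cases p) auto
      have r': "r' \<in> {a..b}" using \<open>r' \<in> {a<..b}\<close> by auto
      show ?thesis
        using metzler_touching_slope[OF \<open>c > 0\<close> h_pos w_pos[OF r'] metzler[OF r'] margin[OF r']]
          that(3,4) p unfolding g_def g'_def by force
    qed
  qed (use \<open>a \<le> b\<close> \<open>\<sigma> \<in> S\<close> \<open>r \<in> {a..b}\<close> in auto)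
  thus ?thesis unfolding g_def h_def by simp
qed

text \<open>
  The sign set \<open>S\<close> makes one statement cover both uses: \<open>S = {-1}\<close>, \<open>M = 0\<close> gives
  nonnegativity and \<open>S = {-1, 1}\<close> gives a bound on \<open>|x r $ j|\<close>.
\<close>
lemma weighted_exp_bound:
  fixes x w w' :: "real \<Rightarrow> real^'n" and F :: "real \<Rightarrow> real^'n^'n" and S :: "real set"
  assumes "a \<le> b" "c > 0" "finite S" "M \<ge> 0"
    and x_deriv: "\<And>r. r \<in> {a..b} \<Longrightarrow>
      (x has_vector_derivative F r *v (\<chi> l. x r $ l / w r $ l)) (at r within {a..b})"
    and w_deriv: "\<And>r l. r \<in> {a..b} \<Longrightarrow>
      ((\<lambda>r. w r $ l) has_real_derivative w' r $ l) (at r within {a..b})"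
    and w_pos: "\<And>r l. r \<in> {a..b} \<Longrightarrow> 0 < w r $ l"
    and metzler: "\<And>r l l'. r \<in> {a..b} \<Longrightarrow> l \<noteq> l' \<Longrightarrow> 0 \<le> F r $ l $ l'"
    and margin: "\<And>r l. r \<in> {a..b} \<Longrightarrow> (F r *v ones) $ l \<le> w' r $ l - c * w r $ l"
    and init: "\<And>\<sigma> l. \<sigma> \<in> S \<Longrightarrow> \<sigma> * x a $ l \<le> M * w a $ l"
    and "\<sigma> \<in> S" "r \<in> {a..b}"
  shows "\<sigma> * x r $ j \<le> M * exp (- (c/2) * (r - a)) * w r $ j"
proof (rule field_le_epsilon)
  fix e :: real assume "e > 0"
  define E where "E = exp (- (c/2) * (r - a)) * w r $ j"
  have "E > 0" unfolding E_def using w_pos[OF \<open>r \<in> {a..b}\<close>] by simp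
  have "\<sigma> * x r $ j < (M + e / E) * exp (- (c/2) * (r - a)) * w r $ j"
  proof (rule weighted_exp_barrier[where m = "M + e / E"])
    show "M + e / E > 0" using \<open>M \<ge> 0\<close> \<open>e > 0\<close> \<open>E > 0\<close> by (simp add: add_nonneg_pos)
    show "\<sigma>' * x a $ l < (M + e / E) * w a $ l" if "\<sigma>' \<in> S" for \<sigma>' l
    proof -
      have "0 < e / E * w a $ l" using w_pos[of a l] \<open>a \<le> b\<close> \<open>e > 0\<close> \<open>E > 0\<close> by simp
      with init[OF that, of l] show ?thesis unfolding distrib_right by linarith
    qed
  qed (fact assms)+
  also have "\<dots> = M * exp (- (c/2) * (r - a)) * w r $ j + e"
    using w_pos[OF \<open>r \<in> {a..b}\<close>, of j] unfolding E_def by (simp add: distrib_right)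
  finally show "\<sigma> * x r $ j \<le> M * exp (- (c/2) * (r - a)) * w r $ j + e" by simp
qed

section \<open>Diagonal matrices\<close>

lemma diag_mat_mult_vec: "diag_mat X \<Longrightarrow> (X *v x) $ j = X $ j $ j * x $ j"
  unfolding diag_mat_def matrix_vector_mult_def
  by (auto intro: sum.neutral simp: sum.remove[of UNIV j])

lemma diag_mat_mult_ones: "diag_mat X \<Longrightarrow> (X *v ones) $ j = X $ j $ j"
  by (simp add: diag_mat_mult_vec ones_def)

lemma diag_mat_invertible_nonzero:
  fixes X :: "real^'n^'n"
  assumes "diag_mat X" "invertible X"
  shows "X $ j $ j \<noteq> 0"
proof
  assume "X $ j $ j = 0"
  hence "X *v axis j 1 = X *v 0"
    using \<open>diag_mat X\<close> by (simp add: vec_eq_iff diag_mat_mult_vec axis_def)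
  with inj_matrix_vector_mult[OF \<open>invertible X\<close>] have "axis j 1 = (0 :: real^'n)"
    by (rule injD)
  thus False by (simp add: axis_eq_0_iff)
qed

lemma diag_mat_inverse_mult_vec:
  fixes X :: "real^'n^'n"
  assumes "diag_mat X" "invertible X"
  shows "matrix_inv X *v x = (\<chi> j. x $ j / X $ j $ j)"
proof -
  let ?y = "\<chi> j. x $ j / X $ j $ j"
  have "X *v ?y = x"
    using assms by (simp add: vec_eq_iff diag_mat_mult_vec diag_mat_invertible_nonzero)
  moreover have "matrix_inv X ** X = mat 1"
    using \<open>invertible X\<close> unfolding matrix_inv_def invertible_def by (rule someI2_ex) auto
  ultimately show ?thesis
    by (metis matrix_vector_mul_assoc matrix_vector_mul_lid)
qed

lemma diag_mat_vector_derivative: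
  fixes X dX :: "real \<Rightarrow> real^'n^'n"
  assumes "a < b" "r \<in> {a..b}"
    and diag: "\<And>r. r \<in> {a..b} \<Longrightarrow> diag_mat (X r)"
    and deriv: "(X has_vector_derivative dX r) (at r within {a..b})"
  shows "diag_mat (dX r)"
  unfolding diag_mat_def
proof (intro allI impI)
  fix j l :: 'n assume "j \<noteq> l"
  have "((\<lambda>r. X r $ j $ l) has_vector_derivative dX r $ j $ l) (at r within {a..b})"
    using has_vector_derivative_vec_nth[OF has_vector_derivative_vec_nth[OF deriv]] .
  moreover have "((\<lambda>r. X r $ j $ l) has_vector_derivative 0) (at r within {a..b})"
    by (rule has_vector_derivative_transform_within[of "\<lambda>_. 0" 0 r "{a..b}" 1])
       (use \<open>r \<in> {a..b}\<close> diag \<open>j \<noteq> l\<close> in \<open>auto simp: diag_mat_def\<close>)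
  ultimately show "dX r $ j $ l = 0"
    using vector_derivative_unique_within_closed_interval assms(1,2) by fastforce
qed

lemma matrix_vector_mult_diff_rdistrib: "(M - M') *v v = M *v v - M' *v (v :: real^'n)"
  by (simp add: vec_eq_iff matrix_vector_mult_def sum_subtractf left_diff_distrib)

lemma offdiag_nonneg_of_shift_nonneg:
  fixes M :: "real^'n^'n"
  assumes "0 \<le> M + \<alpha> *\<^sub>R mat 1" "j \<noteq> l"
  shows "0 \<le> M $ j $ l"
proof -
  have "0 \<le> (M + \<alpha> *\<^sub>R mat 1) $ j $ l" using assms(1) by (simp add: less_eq_vec_def)
  thus ?thesis using assms(2) by (simp add: mat_def)
qed

lemma diag_le_of_shifted_row_sums:
  fixes P Q :: "real^'n^'n"
  assumes "diag_mat P" "diag_mat Q" "\<epsilon> > 0" "(P - Q + \<epsilon> *\<^sub>R mat 1) *v ones \<le> 0"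
  shows "P $ j $ j \<le> Q $ j $ j"
proof -
  have "diag_mat (P - Q + \<epsilon> *\<^sub>R mat 1)" using assms(1,2) unfolding diag_mat_def by (simp add: mat_def)
  hence "(P - Q + \<epsilon> *\<^sub>R mat 1) $ j $ j \<le> 0"
    using assms(4) unfolding less_eq_vec_def by (metis diag_mat_mult_ones zero_index)
  thus ?thesis using assms(3) by (simp add: mat_def)
qed

lemma nonvanishing_continuous_pos:
  fixes f :: "real \<Rightarrow> real"
  assumes "continuous_on {a..b} f" "\<And>r. r \<in> {a..b} \<Longrightarrow> f r \<noteq> 0" "0 < f b" "r \<in> {a..b}"
  shows "0 < f r"
proof (rule ccontr)
  assume "\<not> 0 < f r"
  moreover have "continuous_on {r..b} f"
    using assms(1) by (rule continuous_on_subset) (use assms(4) in auto)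
  ultimately obtain s where "s \<in> {r..b}" "f s = 0"
    using IVT'[of f r 0 b] assms(3,4) by auto
  with assms(2,4) show False by auto
qed

lemma continuous_on_matrix_mult:
  fixes F :: "real \<Rightarrow> real^'k^'m" and G :: "real \<Rightarrow> real^'n^'k"
  assumes "continuous_on S F" "continuous_on S G"
  shows "continuous_on S (\<lambda>t. F t ** G t)"
  unfolding matrix_matrix_mult_def
  by (intro continuous_on_vec_lambda continuous_intros continuous_on_component assms)

lemma continuous_on_row_sum:
  fixes F :: "real \<Rightarrow> real^'n^'m"
  assumes "continuous_on S F"
  shows "continuous_on S (\<lambda>t. (F t *v ones) $ j)"
  unfolding matrix_vector_mult_def ones_def
  by (simp, intro continuous_intros continuous_on_component assms)

lemma compact_family_uniformly_negative:
  fixes g :: "'p \<Rightarrow> 'a::topological_space \<Rightarrow> real"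
  assumes "finite I" "compact K"
    and "\<And>p. p \<in> I \<Longrightarrow> continuous_on K (g p)" "\<And>p t. p \<in> I \<Longrightarrow> t \<in> K \<Longrightarrow> g p t < 0"
  shows "\<exists>c>0. \<forall>p\<in>I. \<forall>t\<in>K. g p t \<le> -c"
proof -
  define Y where "Y = (\<Union>p\<in>I. g p ` K)"
  have "compact Y"
    unfolding Y_def using assms(1-3) by (intro compact_UN compact_continuous_image) auto
  show ?thesis
  proof (cases "Y = {}")
    case True
    thus ?thesis unfolding Y_def by (intro exI[of _ 1]) auto
  next
    case False
    then obtain s where "s \<in> Y" "\<forall>y\<in>Y. y \<le> s"
      using compact_attains_sup[OF \<open>compact Y\<close>] by blast
    moreover from \<open>s \<in> Y\<close> have "s < 0" using assms(4) unfolding Y_def by auto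
    ultimately show ?thesis unfolding Y_def by (intro exI[of _ "- s"]) auto
  qed
qed

lemma compact_family_bounded_above:
  fixes g :: "'p \<Rightarrow> 'a::topological_space \<Rightarrow> real"
  assumes "finite I" "compact K" "\<And>p. p \<in> I \<Longrightarrow> continuous_on K (g p)"
  shows "\<exists>C. \<forall>p\<in>I. \<forall>t\<in>K. g p t \<le> C"
proof -
  have "compact (\<Union>p\<in>I. g p ` K)"
    using assms by (intro compact_UN compact_continuous_image) auto
  then obtain C where "\<forall>y\<in>(\<Union>p\<in>I. g p ` K). y \<le> C"
    using bounded_imp_bdd_above[OF compact_imp_bounded] unfolding bdd_above_def by blast
  thus ?thesis by blast
qed

section \<open>Switching signals and exponential estimates\<close>

lemma switching_interval_exists:
  assumes "switching_signal N t s" "0 \<le> r"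
  obtains k where "t k \<le> r" "r \<le> t (Suc k)"
proof -
  have "t 0 = 0" and "\<exists>k. t k > r"
    using assms unfolding switching_signal_def by auto
  define k' where "k' = (LEAST k. t k > r)"
  have "t k' > r" unfolding k'_def by (rule LeastI_ex) fact
  moreover have "k' \<noteq> 0" using \<open>t k' > r\<close> \<open>t 0 = 0\<close> \<open>0 \<le> r\<close> by (metis not_less)
  then obtain k where "k' = Suc k" by (cases k') auto
  moreover have "\<not> t k > r"
    using not_less_Least[of k "\<lambda>k. t k > r"] unfolding k'_def[symmetric] \<open>k' = Suc k\<close> by auto
  ultimately show ?thesis using that[of k] by auto
qed

lemma switching_times_mono: "switching_signal N t s \<Longrightarrow> t k \<le> t (Suc k)"
  unfolding switching_signal_def strict_mono_def by (simp add: less_imp_le)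

lemma exp_estimate_imp_stable_attractive:
  fixes P :: "(real \<Rightarrow> 'a::real_normed_vector) \<Rightarrow> bool"
  assumes "Q \<ge> 0" "\<gamma> > 0"
    and bound: "\<And>x r. P x \<Longrightarrow> 0 \<le> r \<Longrightarrow> norm (x r) \<le> Q * norm (x 0) * exp (- \<gamma> * r)"
  shows "(\<forall>e>0. \<exists>d>0. \<forall>x. P x \<and> norm (x 0) < d \<longrightarrow> (\<forall>r\<ge>0. norm (x r) < e)) \<and>
         (\<forall>x. P x \<longrightarrow> (x \<longlongrightarrow> 0) at_top)"
proof (intro conjI allI impI)
  fix e :: real assume "e > 0"
  show "\<exists>d>0. \<forall>x. P x \<and> norm (x 0) < d \<longrightarrow> (\<forall>r\<ge>0. norm (x r) < e)"
  proof (intro exI[of _ "e / (Q + 1)"] conjI allI impI)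
    show "e / (Q + 1) > 0" using \<open>e > 0\<close> \<open>Q \<ge> 0\<close> by simp
    fix x :: "real \<Rightarrow> 'a" and r :: real
    assume x: "P x \<and> norm (x 0) < e / (Q + 1)" and "0 \<le> r"
    have "norm (x r) \<le> Q * norm (x 0) * exp (- \<gamma> * r)" using bound x \<open>0 \<le> r\<close> by auto
    also have "\<dots> \<le> Q * norm (x 0)" using \<open>Q \<ge> 0\<close> \<open>\<gamma> > 0\<close> \<open>0 \<le> r\<close> by (simp add: mult_left_le)
    also have "\<dots> \<le> Q * (e / (Q + 1))" using x \<open>Q \<ge> 0\<close> by (intro mult_left_mono) auto
    also have "\<dots> < e" using \<open>e > 0\<close> \<open>Q \<ge> 0\<close> by (simp add: field_simps)
    finally show "norm (x r) < e" .
  qed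
next
  fix x :: "real \<Rightarrow> 'a" assume "P x"
  show "(x \<longlongrightarrow> 0) at_top"
  proof (rule Lim_null_comparison)
    show "\<forall>\<^sub>F r in at_top. norm (x r) \<le> Q * norm (x 0) * exp (- \<gamma> * r)"
      using eventually_ge_at_top[of "0::real"] by eventually_elim (rule bound[OF \<open>P x\<close>])
    show "((\<lambda>r. Q * norm (x 0) * exp (- \<gamma> * r)) \<longlongrightarrow> 0) at_top"
      using \<open>\<gamma> > 0\<close> by real_asymp
  qed
qed

section \<open>Dwell-time stabilization\<close>

text \<open>
  The hypotheses of the theorem, with the \<open>\<alpha>\<close>-shifted nonnegativity replaced by the Metzler
  property it expresses and the \<open>\<epsilon>\<close>-condition at switches by its diagonal consequence.
\<close>
locale dwell_time_design =
  fixes A :: "nat \<Rightarrow> real^'n^'n" and B :: "nat \<Rightarrow> real^'m^'n" and N :: nat and Tb :: real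
    and X dX :: "nat \<Rightarrow> real \<Rightarrow> real^'n^'n" and U :: "nat \<Rightarrow> real \<Rightarrow> real^'n^'m"
  assumes Tb_pos: "Tb > 0"
    and X_deriv: "\<And>i \<tau>. i \<in> {1..N} \<Longrightarrow> \<tau> \<in> {0..Tb} \<Longrightarrow>
      (X i has_vector_derivative dX i \<tau>) (at \<tau> within {0..Tb})"
    and dX_cont: "\<And>i. i \<in> {1..N} \<Longrightarrow> continuous_on {0..Tb} (dX i)"
    and X_diag: "\<And>i \<tau>. i \<in> {1..N} \<Longrightarrow> \<tau> \<in> {0..Tb} \<Longrightarrow> diag_mat (X i \<tau>)"
    and X_invertible: "\<And>i \<tau>. i \<in> {1..N} \<Longrightarrow> \<tau> \<in> {0..Tb} \<Longrightarrow> invertible (X i \<tau>)"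
    and X_end: "\<And>i. i \<in> {1..N} \<Longrightarrow> pos_diag_mat (X i Tb)"
    and U_cont: "\<And>i. i \<in> {1..N} \<Longrightarrow> continuous_on {0..Tb} (U i)"
    and metzler: "\<And>i \<tau> j l. i \<in> {1..N} \<Longrightarrow> \<tau> \<in> {0..Tb} \<Longrightarrow> j \<noteq> l \<Longrightarrow>
      0 \<le> (A i ** X i \<tau> + B i ** U i \<tau>) $ j $ l"
    and end_margin: "\<And>i. i \<in> {1..N} \<Longrightarrow> ent_less ((A i ** X i Tb + B i ** U i Tb) *v ones) 0"
    and flow_margin: "\<And>i \<tau>. i \<in> {1..N} \<Longrightarrow> \<tau> \<in> {0..Tb} \<Longrightarrow>
      ent_less ((- dX i \<tau> + A i ** X i \<tau> + B i ** U i \<tau>) *v ones) 0"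
    and switch_le: "\<And>i i' j. i \<in> {1..N} \<Longrightarrow> i' \<in> {1..N} \<Longrightarrow> i \<noteq> i' \<Longrightarrow>
      X i' Tb $ j $ j \<le> X i 0 $ j $ j"
begin

abbreviation gain :: "nat \<Rightarrow> real \<Rightarrow> real^'n^'m" where
  "gain \<equiv> \<lambda>i \<tau>. U i \<tau> ** matrix_inv (X i \<tau>)"

lemma X_cont: "i \<in> {1..N} \<Longrightarrow> continuous_on {0..Tb} (X i)"
  using X_deriv has_vector_derivative_continuous continuous_on_eq_continuous_within by blast

lemma dX_diag:
  assumes "i \<in> {1..N}" "\<tau> \<in> {0..Tb}"
  shows "diag_mat (dX i \<tau>)"
  using Tb_pos assms(2) X_diag[OF assms(1)] X_deriv[OF assms] by (rule diag_mat_vector_derivative)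

lemma X_diag_pos:
  assumes "i \<in> {1..N}" "\<tau> \<in> {0..Tb}"
  shows "0 < X i \<tau> $ j $ j"
proof (rule nonvanishing_continuous_pos[of 0 Tb "\<lambda>\<tau>. X i \<tau> $ j $ j"])
  show "continuous_on {0..Tb} (\<lambda>\<tau>. X i \<tau> $ j $ j)"
    by (intro continuous_on_component X_cont assms(1))
  show "X i \<tau>' $ j $ j \<noteq> 0" if "\<tau>' \<in> {0..Tb}" for \<tau>'
    using X_diag X_invertible assms(1) that by (intro diag_mat_invertible_nonzero)
  show "0 < X i Tb $ j $ j" using X_end assms(1) unfolding pos_diag_mat_def by auto
qed fact

lemma closed_loop_field_scaled:
  assumes "i \<in> {1..N}" "\<tau> \<in> {0..Tb}"
  shows "A i *v x + B i *v (gain i \<tau> *v x) =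
    (A i ** X i \<tau> + B i ** U i \<tau>) *v (\<chi> j. x $ j / X i \<tau> $ j $ j)"
proof -
  let ?y = "\<chi> j. x $ j / X i \<tau> $ j $ j"
  have "X i \<tau> *v ?y = x"
    using X_diag_pos[OF assms] X_diag[OF assms]
    by (simp add: vec_eq_iff diag_mat_mult_vec less_imp_neq[symmetric])
  hence "A i *v x = (A i ** X i \<tau>) *v ?y"
    by (metis matrix_vector_mul_assoc)
  moreover have "gain i \<tau> *v x = U i \<tau> *v ?y"
    using X_diag[OF assms] X_invertible[OF assms]
    by (simp add: matrix_vector_mul_assoc[symmetric] diag_mat_inverse_mult_vec)
  ultimately show ?thesis
    by (simp add: matrix_vector_mul_assoc matrix_vector_mult_add_rdistrib)
qed

definition decay_margin :: "real \<Rightarrow> bool" where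
  "decay_margin c \<longleftrightarrow> c > 0 \<and>
     (\<forall>i\<in>{1..N}. \<forall>\<tau>\<in>{0..Tb}. \<forall>j.
        ((- dX i \<tau> + A i ** X i \<tau> + B i ** U i \<tau>) *v ones) $ j \<le> - c * X i \<tau> $ j $ j) \<and>
     (\<forall>i\<in>{1..N}. \<forall>j. ((A i ** X i Tb + B i ** U i Tb) *v ones) $ j \<le> - c * X i Tb $ j $ j)"

lemma uniform_row_margin:
  fixes W :: "nat \<Rightarrow> real \<Rightarrow> real^'n^'n"
  assumes "compact K" "K \<subseteq> {0..Tb}"
    and W_cont: "\<And>i. i \<in> {1..N} \<Longrightarrow> continuous_on {0..Tb} (W i)"
    and W_neg: "\<And>i \<tau>. i \<in> {1..N} \<Longrightarrow> \<tau> \<in> K \<Longrightarrow> ent_less (W i \<tau> *v ones) 0"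
  shows "\<exists>c>0. \<forall>i\<in>{1..N}. \<forall>\<tau>\<in>K. \<forall>j. (W i \<tau> *v ones) $ j \<le> - c * X i \<tau> $ j $ j"
proof -
  define g where "g = (\<lambda>(i, j) \<tau>. (W i \<tau> *v ones) $ j / X i \<tau> $ j $ j)"
  have "\<exists>c>0. \<forall>p\<in>{1..N} \<times> (UNIV :: 'n set). \<forall>\<tau>\<in>K. g p \<tau> \<le> - c"
  proof (rule compact_family_uniformly_negative)
    show "finite ({1..N} \<times> (UNIV :: 'n set))" by simp
    show "continuous_on K (g p)" if pI: "p \<in> {1..N} \<times> (UNIV :: 'n set)" for p
    proof -
      obtain i j where p: "p = (i, j)" and i: "i \<in> {1..N}" using pI by auto
      have "continuous_on {0..Tb} (\<lambda>\<tau>. (W i \<tau> *v ones) $ j / X i \<tau> $ j $ j)"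
        using X_diag_pos[OF i]
        by (intro continuous_intros continuous_on_row_sum continuous_on_component W_cont X_cont i)
           (auto simp: less_imp_neq[symmetric])
      thus ?thesis unfolding p g_def by (auto intro: continuous_on_subset[OF _ \<open>K \<subseteq> {0..Tb}\<close>])
    qed
    show "g p \<tau> < 0" if "p \<in> {1..N} \<times> (UNIV :: 'n set)" "\<tau> \<in> K" for p \<tau>
      using that W_neg X_diag_pos \<open>K \<subseteq> {0..Tb}\<close> unfolding g_def ent_less_def
      by (auto simp: divide_neg_pos)
  qed fact
  then obtain c where "c > 0" and c: "\<And>i j \<tau>. i \<in> {1..N} \<Longrightarrow> \<tau> \<in> K \<Longrightarrow> g (i, j) \<tau> \<le> - c"
    by auto
  have "(W i \<tau> *v ones) $ j \<le> - c * X i \<tau> $ j $ j" if "i \<in> {1..N}" "\<tau> \<in> K" for i \<tau> j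
    using c[OF that, of j] X_diag_pos[OF that(1), of \<tau> j] \<open>K \<subseteq> {0..Tb}\<close> that(2)
    unfolding g_def by (auto simp: divide_le_eq)
  with \<open>c > 0\<close> show ?thesis by blast
qed

lemma decay_margin_exists: "\<exists>c. decay_margin c"
proof -
  have "\<exists>c>0. \<forall>i\<in>{1..N}. \<forall>\<tau>\<in>{0..Tb}. \<forall>j.
      ((- dX i \<tau> + A i ** X i \<tau> + B i ** U i \<tau>) *v ones) $ j \<le> - c * X i \<tau> $ j $ j"
  proof (rule uniform_row_margin[where W = "\<lambda>i \<tau>. - dX i \<tau> + A i ** X i \<tau> + B i ** U i \<tau>"])
    show "continuous_on {0..Tb} (\<lambda>\<tau>. - dX i \<tau> + A i ** X i \<tau> + B i ** U i \<tau>)"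
      if "i \<in> {1..N}" for i
      using that by (intro continuous_intros continuous_on_matrix_mult dX_cont X_cont U_cont)
  qed (use flow_margin in auto)
  then obtain c1 where "c1 > 0" and c1: "\<forall>i\<in>{1..N}. \<forall>\<tau>\<in>{0..Tb}. \<forall>j.
      ((- dX i \<tau> + A i ** X i \<tau> + B i ** U i \<tau>) *v ones) $ j \<le> - c1 * X i \<tau> $ j $ j"
    by blast
  have "\<exists>c>0. \<forall>i\<in>{1..N}. \<forall>\<tau>\<in>{Tb}. \<forall>j.
      ((A i ** X i \<tau> + B i ** U i \<tau>) *v ones) $ j \<le> - c * X i \<tau> $ j $ j"
  proof (rule uniform_row_margin[where W = "\<lambda>i \<tau>. A i ** X i \<tau> + B i ** U i \<tau>"])
    show "continuous_on {0..Tb} (\<lambda>\<tau>. A i ** X i \<tau> + B i ** U i \<tau>)" if "i \<in> {1..N}" for i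
      using that by (intro continuous_intros continuous_on_matrix_mult X_cont U_cont)
  qed (use end_margin Tb_pos in auto)
  then obtain c2 where "c2 > 0" and c2: "\<forall>i\<in>{1..N}. \<forall>j.
      ((A i ** X i Tb + B i ** U i Tb) *v ones) $ j \<le> - c2 * X i Tb $ j $ j"
    by blast
  have shrink: "- c' * X i \<tau> $ j $ j \<le> - min c1 c2 * X i \<tau> $ j $ j"
    if "i \<in> {1..N}" "\<tau> \<in> {0..Tb}" "min c1 c2 \<le> c'" for c' i \<tau> j
    using X_diag_pos[OF that(1,2), of j] that(3) by (simp add: mult_right_mono)
  have "decay_margin (min c1 c2)"
    unfolding decay_margin_def
  proof (intro conjI ballI allI)
    fix i \<tau> j assume i: "i \<in> {1..N}" and \<tau>: "\<tau> \<in> {0..Tb}"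
    have "((- dX i \<tau> + A i ** X i \<tau> + B i ** U i \<tau>) *v ones) $ j \<le> - c1 * X i \<tau> $ j $ j"
      using c1 i \<tau> by blast
    also have "\<dots> \<le> - min c1 c2 * X i \<tau> $ j $ j" by (rule shrink[OF i \<tau>]) simp
    finally show "((- dX i \<tau> + A i ** X i \<tau> + B i ** U i \<tau>) *v ones) $ j
        \<le> - min c1 c2 * X i \<tau> $ j $ j" .
  next
    fix i j assume i: "i \<in> {1..N}"
    have "((A i ** X i Tb + B i ** U i Tb) *v ones) $ j \<le> - c2 * X i Tb $ j $ j"
      using c2 i by blast
    also have "\<dots> \<le> - min c1 c2 * X i Tb $ j $ j" by (rule shrink) (use i Tb_pos in auto)
    finally show "((A i ** X i Tb + B i ** U i Tb) *v ones) $ j \<le> - min c1 c2 * X i Tb $ j $ j" .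
  qed (use \<open>c1 > 0\<close> \<open>c2 > 0\<close> in simp)
  thus ?thesis ..
qed

lemma X_diag_bounds:
  obtains l L where "0 < l" "l \<le> L"
    and "\<And>i \<tau> j. i \<in> {1..N} \<Longrightarrow> \<tau> \<in> {0..Tb} \<Longrightarrow> l \<le> X i \<tau> $ j $ j \<and> X i \<tau> $ j $ j \<le> L"
proof -
  let ?I = "{1..N} \<times> (UNIV :: 'n set)"
  have cont: "continuous_on {0..Tb} (\<lambda>\<tau>. X i \<tau> $ j $ j)" if "i \<in> {1..N}" for i j
    by (intro continuous_on_component X_cont that)
  have "\<exists>c>0. \<forall>p\<in>?I. \<forall>\<tau>\<in>{0..Tb}. (\<lambda>(i, j) \<tau>. - X i \<tau> $ j $ j) p \<tau> \<le> - c"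
    by (rule compact_family_uniformly_negative)
       (use cont X_diag_pos in \<open>auto intro!: continuous_intros continuous_on_component X_cont\<close>)
  then obtain l where "l > 0" and l: "\<forall>(i, j)\<in>?I. \<forall>\<tau>\<in>{0..Tb}. l \<le> X i \<tau> $ j $ j"
    by fastforce
  have "\<exists>L. \<forall>p\<in>?I. \<forall>\<tau>\<in>{0..Tb}. (\<lambda>(i, j) \<tau>. X i \<tau> $ j $ j) p \<tau> \<le> L"
    by (rule compact_family_bounded_above) (use cont in auto)
  then obtain L where L: "\<forall>(i, j)\<in>?I. \<forall>\<tau>\<in>{0..Tb}. X i \<tau> $ j $ j \<le> L"
    by fastforce
  show ?thesis
    by (rule that[of l "max l L"]) (use \<open>l > 0\<close> l L in \<open>fastforce simp: le_max_iff_disj\<close>)+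
qed

lemma X_diag_shift_deriv:
  assumes "i \<in> {1..N}" "a \<le> b" "b \<le> a + Tb" "r \<in> {a..b}"
  shows "((\<lambda>r. X i (r - a) $ j $ j) has_real_derivative dX i (r - a) $ j $ j) (at r within {a..b})"
proof -
  have "r - a \<in> {0..Tb}" using assms(3,4) by auto
  from has_vector_derivative_vec_nth[OF has_vector_derivative_vec_nth[OF X_deriv[OF assms(1) this]]]
  have "((\<lambda>\<tau>. X i \<tau> $ j $ j) has_real_derivative dX i (r - a) $ j $ j) (at (r - a) within {0..Tb})"
    by (simp add: has_real_derivative_iff_has_vector_derivative)
  hence "((\<lambda>\<tau>. X i \<tau> $ j $ j) has_real_derivative dX i (r - a) $ j $ j)
      (at (r - a) within (\<lambda>r. r - a) ` {a..b})"
    by (rule has_field_derivative_subset) (use assms(3) in auto)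
  moreover have "((\<lambda>r. r - a) has_real_derivative 1) (at r within {a..b})"
    by (auto intro!: derivative_eq_intros)
  ultimately show ?thesis
    using DERIV_image_chain by (fastforce simp: o_def)
qed

lemma mode_bound_transient:
  assumes "decay_margin c" "i \<in> {1..N}" "finite S" "M \<ge> 0" "a \<le> b" "b \<le> a + Tb"
    and dx: "\<And>r. r \<in> {a..b} \<Longrightarrow>
      (x has_vector_derivative A i *v x r + B i *v (gain i (r - a) *v x r)) (at r within {a..b})"
    and init: "\<And>\<sigma> j. \<sigma> \<in> S \<Longrightarrow> \<sigma> * x a $ j \<le> M * X i 0 $ j $ j"
    and "\<sigma> \<in> S" "r \<in> {a..b}"
  shows "\<sigma> * x r $ j \<le> M * exp (- (c/2) * (r - a)) * X i (r - a) $ j $ j"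
proof -
  have \<tau>: "r - a \<in> {0..Tb}" if "r \<in> {a..b}" for r using that assms(6) by auto
  have "\<sigma> * x r $ j \<le> M * exp (- (c/2) * (r - a)) * (\<chi> l. X i (r - a) $ l $ l) $ j"
  proof (rule weighted_exp_bound[where F = "\<lambda>r. A i ** X i (r - a) + B i ** U i (r - a)"
        and w' = "\<lambda>r. \<chi> l. dX i (r - a) $ l $ l"])
    show "(x has_vector_derivative (A i ** X i (r - a) + B i ** U i (r - a)) *v
        (\<chi> l. x r $ l / (\<chi> l. X i (r - a) $ l $ l) $ l)) (at r within {a..b})"
      if "r \<in> {a..b}" for r
      using dx[OF that] closed_loop_field_scaled[OF assms(2) \<tau>[OF that]] by simp
    show "((\<lambda>r. (\<chi> l. X i (r - a) $ l $ l) $ l) has_real_derivative (\<chi> l. dX i (r - a) $ l $ l) $ l)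
        (at r within {a..b})" if "r \<in> {a..b}" for r l
      using X_diag_shift_deriv[OF assms(2,5,6) that] by simp
    show "0 < (\<chi> l. X i (r - a) $ l $ l) $ l" if "r \<in> {a..b}" for r l
      using X_diag_pos[OF assms(2) \<tau>[OF that]] by simp
    show "0 \<le> (A i ** X i (r - a) + B i ** U i (r - a)) $ l $ l'" if "r \<in> {a..b}" "l \<noteq> l'" for r l l'
      using metzler[OF assms(2) \<tau>[OF that(1)] that(2)] .
    show "((A i ** X i (r - a) + B i ** U i (r - a)) *v ones) $ l
        \<le> (\<chi> l. dX i (r - a) $ l $ l) $ l - c * (\<chi> l. X i (r - a) $ l $ l) $ l" if "r \<in> {a..b}" for r l
    proof -
      have "((- dX i (r - a) + A i ** X i (r - a) + B i ** U i (r - a)) *v ones) $ l =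
          ((A i ** X i (r - a) + B i ** U i (r - a)) *v ones) $ l - dX i (r - a) $ l $ l"
        using dX_diag[OF assms(2) \<tau>[OF that]]
        by (simp add: add.assoc matrix_vector_mult_add_rdistrib matrix_vector_mult_diff_rdistrib
            diag_mat_mult_ones)
      moreover have "((- dX i (r - a) + A i ** X i (r - a) + B i ** U i (r - a)) *v ones) $ l
          \<le> - c * X i (r - a) $ l $ l"
        using assms(1,2) \<tau>[OF that] unfolding decay_margin_def by blast
      ultimately show ?thesis by simp
    qed
  qed (use assms init decay_margin_def in auto)
  thus ?thesis by simp
qed

lemma mode_bound_steady:
  assumes "decay_margin c" "i \<in> {1..N}" "finite S" "M \<ge> 0" "a \<le> b"
    and dx: "\<And>r. r \<in> {a..b} \<Longrightarrow>
      (x has_vector_derivative A i *v x r + B i *v (gain i Tb *v x r)) (at r within {a..b})"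
    and init: "\<And>\<sigma> j. \<sigma> \<in> S \<Longrightarrow> \<sigma> * x a $ j \<le> M * X i Tb $ j $ j"
    and "\<sigma> \<in> S" "r \<in> {a..b}"
  shows "\<sigma> * x r $ j \<le> M * exp (- (c/2) * (r - a)) * X i Tb $ j $ j"
proof -
  have Tb: "Tb \<in> {0..Tb}" using Tb_pos by simp
  have "\<sigma> * x r $ j \<le> M * exp (- (c/2) * (r - a)) * (\<chi> l. X i Tb $ l $ l) $ j"
  proof (rule weighted_exp_bound[where F = "\<lambda>_. A i ** X i Tb + B i ** U i Tb" and w' = "\<lambda>_. 0"])
    show "(x has_vector_derivative (A i ** X i Tb + B i ** U i Tb) *v
        (\<chi> l. x r $ l / (\<chi> l. X i Tb $ l $ l) $ l)) (at r within {a..b})"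
      if "r \<in> {a..b}" for r
      using dx[OF that] closed_loop_field_scaled[OF assms(2) Tb] by simp
    show "0 < (\<chi> l. X i Tb $ l $ l) $ l" for l
      using X_diag_pos[OF assms(2) Tb] by simp
    show "0 \<le> (A i ** X i Tb + B i ** U i Tb) $ l $ l'" if "l \<noteq> l'" for l l'
      using metzler[OF assms(2) Tb that] .
    show "((A i ** X i Tb + B i ** U i Tb) *v ones) $ l \<le> (0 :: real^'n) $ l - c * (\<chi> l. X i Tb $ l $ l) $ l"
      for l
      using assms(1,2) unfolding decay_margin_def by simp
  qed (use assms init decay_margin_def in \<open>auto intro: derivative_eq_intros\<close>)
  thus ?thesis by simp
qed

lemma mode_bound:
  assumes "decay_margin c" "i \<in> {1..N}" "finite S" "M \<ge> 0" "a \<le> b"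
    and dx: "\<And>r. r \<in> {a..b} \<Longrightarrow> (x has_vector_derivative
      A i *v x r + B i *v (gain i (min (r - a) Tb) *v x r)) (at r within {a..b})"
    and init: "\<And>\<sigma> j. \<sigma> \<in> S \<Longrightarrow> \<sigma> * x a $ j \<le> M * X i 0 $ j $ j"
    and "\<sigma> \<in> S" "r \<in> {a..b}"
  shows "\<sigma> * x r $ j \<le> M * exp (- (c/2) * (r - a)) * X i (min (r - a) Tb) $ j $ j"
proof -
  have transient: "\<sigma> * x r $ j \<le> M * exp (- (c/2) * (r - a)) * X i (r - a) $ j $ j"
    if "\<sigma> \<in> S" "r \<in> {a..min b (a + Tb)}" for \<sigma> r j
  proof (rule mode_bound_transient[where b = "min b (a + Tb)"])
    fix r assume "r \<in> {a..min b (a + Tb)}"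
    with dx[of r] show "(x has_vector_derivative A i *v x r + B i *v (gain i (r - a) *v x r))
        (at r within {a..min b (a + Tb)})"
      by (auto intro: has_vector_derivative_within_subset)
  qed (use assms(1-5) Tb_pos init that in auto)
  show ?thesis
  proof (cases "r \<le> a + Tb")
    case True
    thus ?thesis using transient[OF \<open>\<sigma> \<in> S\<close>] \<open>r \<in> {a..b}\<close> by simp
  next
    case False
    let ?M = "M * exp (- (c/2) * Tb)"
    have "\<sigma> * x r $ j \<le> ?M * exp (- (c/2) * (r - (a + Tb))) * X i Tb $ j $ j"
    proof (rule mode_bound_steady[where a = "a + Tb" and b = b])
      fix r assume "r \<in> {a + Tb..b}"
      with dx[of r] Tb_pos show "(x has_vector_derivative A i *v x r + B i *v (gain i Tb *v x r))
          (at r within {a + Tb..b})"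
        by (auto intro: has_vector_derivative_within_subset)
    next
      fix \<sigma> j assume "\<sigma> \<in> S"
      from transient[OF this, of "a + Tb" j] assms(5) False \<open>r \<in> {a..b}\<close> Tb_pos
      show "\<sigma> * x (a + Tb) $ j \<le> ?M * X i Tb $ j $ j" by simp
    qed (use assms(1-4) \<open>\<sigma> \<in> S\<close> False \<open>r \<in> {a..b}\<close> in auto)
    also have "?M * exp (- (c/2) * (r - (a + Tb))) = M * exp (- (c/2) * (r - a))"
      by (simp add: mult.assoc flip: exp_add) (simp add: field_simps)
    finally show ?thesis using False by simp
  qed
qed

lemma solution_deriv_on_interval:
  assumes "closed_loop_solution A B gain Tb t s x" "r \<in> {t k..t (Suc k)}"
  shows "(x has_vector_derivative A (s k) *v x r + B (s k) *v (gain (s k) (min (r - t k) Tb) *v x r))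
    (at r within {t k..t (Suc k)})"
  using assms unfolding closed_loop_solution_def by blast

lemma solution_bound_on_interval:
  assumes c: "decay_margin c" and sw: "switching_signal N t s"
    and sol: "closed_loop_solution A B gain Tb t s x" and "finite S" "M \<ge> 0"
    and init: "\<And>\<sigma> j. \<sigma> \<in> S \<Longrightarrow> \<sigma> * x (t k) $ j \<le> M * exp (- (c/2) * t k) * X (s k) 0 $ j $ j"
    and "\<sigma> \<in> S" "r \<in> {t k..t (Suc k)}"
  shows "\<sigma> * x r $ j \<le> M * exp (- (c/2) * r) * X (s k) (min (r - t k) Tb) $ j $ j"
proof -
  have "s k \<in> {1..N}" using sw unfolding switching_signal_def by auto
  have "\<sigma> * x r $ j \<le> (M * exp (- (c/2) * t k)) * exp (- (c/2) * (r - t k)) *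
      X (s k) (min (r - t k) Tb) $ j $ j"
    by (rule mode_bound[OF c \<open>s k \<in> {1..N}\<close> \<open>finite S\<close> _ switching_times_mono[OF sw]
          solution_deriv_on_interval[OF sol] init])
       (use assms in auto)
  also have "(M * exp (- (c/2) * t k)) * exp (- (c/2) * (r - t k)) = M * exp (- (c/2) * r)"
    by (simp add: mult.assoc flip: exp_add) (simp add: algebra_simps)
  finally show ?thesis .
qed

lemma closed_loop_positive: "closed_loop_positive N A B gain Tb"
  unfolding closed_loop_positive_def
proof (intro allI impI)
  fix t s x and r :: real
  assume H: "switching_signal N t s \<and> closed_loop_solution A B gain Tb t s x \<and> 0 \<le> x 0"
    and "0 \<le> r"
  obtain c where c: "decay_margin c" using decay_margin_exists ..
  have sw: "switching_signal N t s" and sol: "closed_loop_solution A B gain Tb t s x"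
    using H by auto
  have nonneg: "0 \<le> x r' $ j" if "\<forall>l. 0 \<le> x (t k) $ l" "r' \<in> {t k..t (Suc k)}" for k r' j
  proof -
    have "- 1 * x r' $ j \<le> 0 * exp (- (c/2) * r') * X (s k) (min (r' - t k) Tb) $ j $ j"
      by (rule solution_bound_on_interval[OF c sw sol, where S = "{- 1}"]) (use that in auto)
    thus ?thesis by simp
  qed
  have switches: "\<forall>j. 0 \<le> x (t k) $ j" for k
  proof (induction k)
    case 0
    thus ?case using H sw unfolding switching_signal_def less_eq_vec_def by auto
  next
    case (Suc k)
    thus ?case using nonneg switching_times_mono[OF sw, of k] by auto
  qed
  obtain k where "t k \<le> r" "r \<le> t (Suc k)"
    using switching_interval_exists[OF sw \<open>0 \<le> r\<close>] .
  with switches[of k] show "0 \<le> x r"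
    unfolding less_eq_vec_def using nonneg by auto
qed

lemma solution_bound_at_switches:
  assumes c: "decay_margin c" and sw: "switching_signal N t s" and dwell: "dwell_time Tb t"
    and sol: "closed_loop_solution A B gain Tb t s x" and "finite S" "M \<ge> 0"
    and init: "\<And>\<sigma> j. \<sigma> \<in> S \<Longrightarrow> \<sigma> * x 0 $ j \<le> M * X (s 0) 0 $ j $ j"
  shows "\<sigma> \<in> S \<Longrightarrow> \<sigma> * x (t k) $ j \<le> M * exp (- (c/2) * t k) * X (s k) 0 $ j $ j"
proof (induction k arbitrary: \<sigma> j)
  case 0
  have "t 0 = 0" using sw unfolding switching_signal_def by simp
  thus ?case using init[OF 0] by simp
next
  case (Suc k)
  have "s k \<in> {1..N}" "s (Suc k) \<in> {1..N}" "s (Suc k) \<noteq> s k"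
    using sw unfolding switching_signal_def by auto
  hence "X (s k) Tb $ j $ j \<le> X (s (Suc k)) 0 $ j $ j" by (intro switch_le)
  moreover have "min (t (Suc k) - t k) Tb = Tb" using dwell unfolding dwell_time_def by simp
  ultimately have "M * exp (- (c/2) * t (Suc k)) * X (s k) (min (t (Suc k) - t k) Tb) $ j $ j
      \<le> M * exp (- (c/2) * t (Suc k)) * X (s (Suc k)) 0 $ j $ j"
    using \<open>M \<ge> 0\<close> by (intro mult_left_mono) auto
  with solution_bound_on_interval[OF c sw sol \<open>finite S\<close> \<open>M \<ge> 0\<close> Suc.IH Suc.prems, of "t (Suc k)" j]
    switching_times_mono[OF sw, of k]
  show ?case by auto
qed

lemma solution_abs_bound:
  assumes c: "decay_margin c" and sw: "switching_signal N t s" and dwell: "dwell_time Tb t"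
    and sol: "closed_loop_solution A B gain Tb t s x" and "M \<ge> 0" "0 \<le> r"
    and init: "\<And>j. \<bar>x 0 $ j\<bar> \<le> M * X (s 0) 0 $ j $ j"
    and X_le: "\<And>i \<tau> j. i \<in> {1..N} \<Longrightarrow> \<tau> \<in> {0..Tb} \<Longrightarrow> X i \<tau> $ j $ j \<le> L"
  shows "\<bar>x r $ j\<bar> \<le> M * exp (- (c/2) * r) * L"
proof -
  let ?S = "{- 1, 1} :: real set"
  obtain k where k: "r \<in> {t k..t (Suc k)}"
    using switching_interval_exists[OF sw \<open>0 \<le> r\<close>] by auto
  have "s k \<in> {1..N}" "min (r - t k) Tb \<in> {0..Tb}"
    using sw k Tb_pos unfolding switching_signal_def by auto
  hence "M * exp (- (c/2) * r) * X (s k) (min (r - t k) Tb) $ j $ j \<le> M * exp (- (c/2) * r) * L"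
    using \<open>M \<ge> 0\<close> by (intro mult_left_mono X_le) auto
  moreover have "\<sigma> * x r $ j \<le> M * exp (- (c/2) * r) * X (s k) (min (r - t k) Tb) $ j $ j"
    if "\<sigma> \<in> ?S" for \<sigma>
  proof (rule solution_bound_on_interval[OF c sw sol _ \<open>M \<ge> 0\<close> _ that k])
    show "\<sigma>' * x (t k) $ l \<le> M * exp (- (c/2) * t k) * X (s k) 0 $ l $ l" if "\<sigma>' \<in> ?S" for \<sigma>' l
      by (rule solution_bound_at_switches[OF c sw dwell sol _ \<open>M \<ge> 0\<close> _ that])
         (use init in \<open>auto simp: abs_le_iff\<close>)
  qed simp
  ultimately show ?thesis by (force simp: abs_le_iff)
qed

lemma closed_loop_exp_estimate:
  obtains Q \<gamma> where "Q \<ge> 0" "\<gamma> > 0"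
    and "\<And>t s x r. switching_signal N t s \<Longrightarrow> dwell_time Tb t \<Longrightarrow>
      closed_loop_solution A B gain Tb t s x \<Longrightarrow> 0 \<le> r \<Longrightarrow>
      norm (x r) \<le> Q * norm (x 0) * exp (- \<gamma> * r)"
proof -
  obtain c where c: "decay_margin c" using decay_margin_exists ..
  obtain l L where "0 < l" "l \<le> L"
    and lL: "\<And>i \<tau> j. i \<in> {1..N} \<Longrightarrow> \<tau> \<in> {0..Tb} \<Longrightarrow> l \<le> X i \<tau> $ j $ j \<and> X i \<tau> $ j $ j \<le> L"
    by (rule X_diag_bounds) blast
  show ?thesis
  proof (rule that[of "real CARD('n) * L / l" "c/2"])
    show "real CARD('n) * L / l \<ge> 0" using \<open>0 < l\<close> \<open>l \<le> L\<close> by simp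
    show "c/2 > 0" using c unfolding decay_margin_def by simp
    fix t s x and r :: real
    assume sw: "switching_signal N t s" and dwell: "dwell_time Tb t"
      and sol: "closed_loop_solution A B gain Tb t s x" and "0 \<le> r"
    define M where "M = norm (x 0) / l"
    have "M \<ge> 0" unfolding M_def using \<open>0 < l\<close> by simp
    have "s 0 \<in> {1..N}" using sw unfolding switching_signal_def by auto
    have "\<bar>x 0 $ j\<bar> \<le> M * X (s 0) 0 $ j $ j" for j
    proof -
      have "\<bar>x 0 $ j\<bar> \<le> M * l" unfolding M_def using \<open>0 < l\<close> component_le_norm_cart by simp
      also have "\<dots> \<le> M * X (s 0) 0 $ j $ j"
        using lL[OF \<open>s 0 \<in> {1..N}\<close>, of 0] Tb_pos \<open>M \<ge> 0\<close> by (intro mult_left_mono) auto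
      finally show ?thesis .
    qed
    hence "\<bar>x r $ j\<bar> \<le> M * exp (- (c/2) * r) * L" for j
      by (intro solution_abs_bound[OF c sw dwell sol]) (use \<open>M \<ge> 0\<close> \<open>0 \<le> r\<close> lL in auto)
    hence "norm (x r) \<le> (\<Sum>j\<in>(UNIV :: 'n set). M * exp (- (c/2) * r) * L)"
      by (intro order_trans[OF norm_le_l1_cart] sum_mono)
    also have "\<dots> = real CARD('n) * L / l * norm (x 0) * exp (- (c/2) * r)"
      unfolding M_def using \<open>0 < l\<close> by simp
    finally show "norm (x r) \<le> real CARD('n) * L / l * norm (x 0) * exp (- (c/2) * r)" .
  qed
qed

lemma closed_loop_GAS: "closed_loop_GAS_dwell N A B gain Tb"
  unfolding closed_loop_GAS_dwell_def
proof (intro allI impI)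
  fix t s assume "switching_signal N t s \<and> dwell_time Tb t"
  obtain Q \<gamma> where "Q \<ge> 0" "\<gamma> > 0" and bound: "\<And>t s x r. switching_signal N t s \<Longrightarrow>
      dwell_time Tb t \<Longrightarrow> closed_loop_solution A B gain Tb t s x \<Longrightarrow> 0 \<le> r \<Longrightarrow>
      norm (x r) \<le> Q * norm (x 0) * exp (- \<gamma> * r)"
    by (rule closed_loop_exp_estimate) blast
  show "(\<forall>e>0. \<exists>d>0. \<forall>x. closed_loop_solution A B gain Tb t s x \<and> norm (x 0) < d
            \<longrightarrow> (\<forall>r\<ge>0. norm (x r) < e)) \<and>
        (\<forall>x. closed_loop_solution A B gain Tb t s x \<longrightarrow> (x \<longlongrightarrow> 0) at_top)"
    by (rule exp_estimate_imp_stable_attractive[OF \<open>Q \<ge> 0\<close> \<open>\<gamma> > 0\<close>])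
       (use bound \<open>switching_signal N t s \<and> dwell_time Tb t\<close> in auto)
qed

end

theorem corollary5:
  fixes A :: "nat \<Rightarrow> real^'n^'n" and B :: "nat \<Rightarrow> real^'m^'n" and N :: nat
    and Tb \<epsilon> \<alpha> :: real
    and X dX :: "nat \<Rightarrow> real \<Rightarrow> real^'n^'n" and U :: "nat \<Rightarrow> real \<Rightarrow> real^'n^'m"
  assumes Tb: "Tb > 0" and eps: "\<epsilon> > 0" and alpha: "\<alpha> > 0"
    and X_deriv: "\<forall>i\<in>{1..N}. \<forall>\<tau>\<in>{0..Tb}.
                    (X i has_vector_derivative dX i \<tau>) (at \<tau> within {0..Tb})"
    and dX_cont: "\<forall>i\<in>{1..N}. continuous_on {0..Tb} (dX i)"
    and X_diag: "\<forall>i\<in>{1..N}. \<forall>\<tau>\<in>{0..Tb}. diag_mat (X i \<tau>) \<and> invertible (X i \<tau>)"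
    and X_end: "\<forall>i\<in>{1..N}. pos_diag_mat (X i Tb)"
    and U_cont: "\<forall>i\<in>{1..N}. continuous_on {0..Tb} (U i)"
    and c1: "\<forall>i\<in>{1..N}. \<forall>\<tau>\<in>{0..Tb}. A i ** X i \<tau> + B i ** U i \<tau> + \<alpha> *\<^sub>R mat 1 \<ge> 0"
    and c2: "\<forall>i\<in>{1..N}. ent_less ((A i ** X i Tb + B i ** U i Tb) *v ones) 0"
    and c3: "\<forall>i\<in>{1..N}. \<forall>\<tau>\<in>{0..Tb}.
               ent_less ((- dX i \<tau> + A i ** X i \<tau> + B i ** U i \<tau>) *v ones) 0"
    and c4: "\<forall>i\<in>{1..N}. \<forall>j\<in>{1..N}. i \<noteq> j \<longrightarrow>
               (X j Tb - X i 0 + \<epsilon> *\<^sub>R mat 1) *v ones \<le> 0"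
  shows "closed_loop_positive N A B (\<lambda>i \<tau>. U i \<tau> ** matrix_inv (X i \<tau>)) Tb \<and>
         closed_loop_GAS_dwell N A B (\<lambda>i \<tau>. U i \<tau> ** matrix_inv (X i \<tau>)) Tb"
proof -
  interpret dwell_time_design A B N Tb X dX U
  proof
    fix i \<tau> and j l :: 'n assume "i \<in> {1..N}" "\<tau> \<in> {0..Tb}" "j \<noteq> l"
    with c1 show "0 \<le> (A i ** X i \<tau> + B i ** U i \<tau>) $ j $ l"
      by (intro offdiag_nonneg_of_shift_nonneg[where \<alpha> = \<alpha>]) simp_all
  next
    fix i i' and j :: 'n assume "i \<in> {1..N}" "i' \<in> {1..N}" "i \<noteq> i'"
    moreover have "Tb \<in> {0..Tb}" "0 \<in> {0..Tb}" using Tb by auto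
    ultimately show "X i' Tb $ j $ j \<le> X i 0 $ j $ j"
      using X_diag c4 eps by (intro diag_le_of_shifted_row_sums[where \<epsilon> = \<epsilon>]) simp_all
  qed (use Tb X_deriv dX_cont X_diag X_end U_cont c2 c3 in simp_all)
  show ?thesis using closed_loop_positive closed_loop_GAS by simp
qed

end
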